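(* Let $V$ be a real vector space of dimension $m=p+q\ge3$ with a non-degenerate symmetric inner product of arbitrary signature $(p,q)$, and let $\nabla R$ be a covariant derivative algebraic curvature tensor on $V$. If the eigenvalues of $\mathcal{S}_{\nabla R}(\cdot)$ are constant on $S^+(V)$ and on $S^-(V)$, then $\mathcal{S}_{\nabla R}(x)$ is nilpotent for every complex null vector $x\in\mathcal{N}$.
   Context: A covariant derivative algebraic curvature tensor is $\nabla R\in\otimes^5V^*$ satisfying $\nabla R(a,b,c,d;e)=-\nabla R(b,a,c,d;e)=\nabla R(c,d,a,b;e)$, $\nabla R(a,b,c,d;e)+\nabla R(a,c,d,b;e)+\nabla R(a,d,b,c;e)=0$, and $\nabla R(a,b,c,d;e)+\nabla R(a,b,d,e;c)+\nabla R(a,b,e,c;d)=0$. The Szab\'o operator $\mathcal{S}_{\nabla R}(x)$ is the linear map of $V$ defined by $(\mathcal{S}_{\nabla R}(x)y,w)=\nabla R(y,x,x,w;x)$. $S^\pm(V)=\{v\in V:(v,v)=\pm1\}$ are the pseudo-spheres of unit spacelike and timelike vectors. Everything is extended complex-multilinearly to $V_{\mathbb{C}}=V\otimes\mathbb{C}$; $\mathcal{N}=\{v\in V_{\mathbb{C}}:(v,v)=0\}$. A linear map $A$ is nilpotent if $A^m=0$, equivalently $\operatorname{trace}(A^i)=0$ for $1\le i\le m$. *)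

theory Defs
  imports "HOL-Analysis.Analysis"
begin

text \<open>The inner product is
 (u,v) = u^T G v for a real symmetric invertible (non-degenerate) matrix G of arbitrary
 signature. A 5-tensor on V is given by its components T i j k l r on the basis.
 Everything is extended complex-multilinearly to V_C = complex^'n.\<close>

definition cmat :: "real^'n^'n \<Rightarrow> complex^'n^'n" where
  "cmat G = (\<chi> i j. complex_of_real (G $ i $ j))"

definition cvec :: "real^'n \<Rightarrow> complex^'n" where
  "cvec x = (\<chi> i. complex_of_real (x $ i))"

definition ip :: "real^'n^'n \<Rightarrow> complex^'n \<Rightarrow> complex^'n \<Rightarrow> complex" where
  "ip G u v = (\<Sum>i\<in>UNIV. \<Sum>j\<in>UNIV. complex_of_real (G $ i $ j) * u $ i * v $ j)"

definition nondeg_sym :: "real^'n^'n \<Rightarrow> bool" where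
  "nondeg_sym G \<longleftrightarrow> transpose G = G \<and> invertible G"

definition tens5 :: "('n \<Rightarrow> 'n \<Rightarrow> 'n \<Rightarrow> 'n \<Rightarrow> 'n \<Rightarrow> real) \<Rightarrow>
    complex^'n \<Rightarrow> complex^'n \<Rightarrow> complex^'n \<Rightarrow> complex^'n \<Rightarrow> complex^'n \<Rightarrow> complex" where
  "tens5 T a b c d e = (\<Sum>i\<in>UNIV. \<Sum>j\<in>UNIV. \<Sum>k\<in>UNIV. \<Sum>l\<in>UNIV. \<Sum>r\<in>UNIV.
      complex_of_real (T i j k l r) * a $ i * b $ j * c $ k * d $ l * e $ r)"

text \<open>covariant derivative algebraic curvature tensor (the defining symmetries, on basis
 components; by multilinearity equivalent to the identities on all vectors)\<close>
definition cdact :: "('n \<Rightarrow> 'n \<Rightarrow> 'n \<Rightarrow> 'n \<Rightarrow> 'n \<Rightarrow> real) \<Rightarrow> bool" where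
  "cdact T \<longleftrightarrow> (\<forall>a b c d e.
      T a b c d e = - T b a c d e \<and>
      T a b c d e = T c d a b e \<and>
      T a b c d e + T a c d b e + T a d b c e = 0 \<and>
      T a b c d e + T a b d e c + T a b e c d = 0)"

text \<open>Matrix of the Szabo operator S(x), defined by (S(x) y, w) = nablaR(y,x,x,w;x).
 With B w y = nablaR(e_y,x,x,e_w;x), S(x) = G^{-1} B.\<close>
definition szabo :: "real^'n^'n \<Rightarrow> ('n \<Rightarrow> 'n \<Rightarrow> 'n \<Rightarrow> 'n \<Rightarrow> 'n \<Rightarrow> real) \<Rightarrow>
    complex^'n \<Rightarrow> complex^'n^'n" where
  "szabo G T x = matrix_inv (cmat G) **
      (\<chi> w y. tens5 T (axis y 1) x x (axis w 1) x)"

definition eigenvalues :: "complex^'n^'n \<Rightarrow> complex set" where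
  "eigenvalues A = {c. \<exists>v. v \<noteq> 0 \<and> A *v v = c *s v}"

definition nilpotent_mat :: "complex^'n^'n \<Rightarrow> bool" where
  "nilpotent_mat A \<longleftrightarrow> (\<exists>k. ((\<lambda>v. A *v v) ^^ k) = (\<lambda>v. 0))"

end

theory Submission
  imports
    Defs
    "HOL-Complex_Analysis.Conformal_Mappings"
    "HOL-Computational_Algebra.Fundamental_Theorem_Algebra"
begin

text \<open>Fix \<open>x0\<close> with \<open>(x0,x0) = \<kappa> = \<plusminus>1\<close> and let \<open>E\<close> be the finite spectrum of \<open>S(x0)\<close>.
  Since \<open>S(c x) = c^3 S(x)\<close>, at every real \<open>x\<close> with \<open>\<kappa> (x,x) > 0\<close> each eigenvalue \<open>\<mu>\<close> of
  \<open>S(x)\<close> satisfies \<open>\<mu>^2 = ((x,x)/\<kappa>)^3 l^2\<close> for some \<open>l \<in> E\<close>. Hence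
  \<open>K(x) = \<Prod>l\<in>E. S(x)^2 - ((x,x)/\<kappa>)^3 l^2\<close> commutes with \<open>S(x)\<close> and kills all its
  eigenvectors, so \<open>K(x)^m = 0\<close> for \<open>m = dim V\<close>. The entries of \<open>K(x)^m\<close> depend polynomially on
  \<open>x\<close> and vanish on a nonempty open cone of real vectors, hence on all of \<open>V\<^sub>\<complex>\<close>; at a null
  vector \<open>K(x) = S(x)^(2|E|)\<close>.\<close>

section \<open>Linear recurrences and polynomials in a matrix\<close>

context finite_dimensional_vector_space
begin

lemma span_image_lessThan_imp_sum:
  fixes v :: "nat \<Rightarrow> 'b"
  shows "x \<in> span (v ` {..<j}) \<Longrightarrow> \<exists>c. x = (\<Sum>i<j. scale (c i) (v i))"
proof (induction j arbitrary: x)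
  case 0
  then show ?case by simp
next
  case (Suc j)
  then obtain k where "x - scale k (v j) \<in> span (v ` {..<j})"
    by (auto simp: lessThan_Suc span_breakdown_eq)
  with Suc.IH obtain c where "x - scale k (v j) = (\<Sum>i<j. scale (c i) (v i))" by blast
  then have "x = (\<Sum>i<Suc j. scale ((c(j := k)) i) (v i))" by (simp add: algebra_simps)
  then show ?case by blast
qed

lemma exists_linear_recurrence:
  fixes v :: "nat \<Rightarrow> 'b"
  shows "\<exists>j \<le> dimension. \<exists>c. v j = (\<Sum>i<j. scale (c i) (v i))"
proof (rule ccontr)
  assume "\<not> ?thesis"
  then have fresh: "j \<le> dimension \<Longrightarrow> v j \<notin> span (v ` {..<j})" for j
    using span_image_lessThan_imp_sum by blast
  have "j \<le> Suc dimension \<Longrightarrow> dim (v ` {..<j}) = j" for j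
    by (induction j) (auto simp: lessThan_Suc dim_insert fresh)
  from this[of "Suc dimension"] dim_subset_UNIV[of "v ` {..<Suc dimension}"] show False
    by simp
qed

end

primrec matrix_power :: "'a::semiring_1^'n^'n \<Rightarrow> nat \<Rightarrow> 'a^'n^'n" where
  "matrix_power A 0 = mat 1"
| "matrix_power A (Suc k) = A ** matrix_power A k"

lemma matrix_power_apply: "matrix_power A k *v v = ((*v) A ^^ k) v"
  by (induction k arbitrary: v) (simp_all add: matrix_vector_mul_assoc[symmetric])

lemma matrix_power_matrix_power: "matrix_power (matrix_power A m) n = matrix_power A (m * n)"
proof -
  have "(*v) (matrix_power A m) = (*v) A ^^ m" by (rule ext) (rule matrix_power_apply)
  then show ?thesis unfolding matrix_eq matrix_power_apply by (simp add: funpow_mult)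
qed

lemma nilpotent_mat_iff_matrix_power: "nilpotent_mat A \<longleftrightarrow> (\<exists>k. matrix_power A k = 0)"
  by (simp add: nilpotent_mat_def matrix_eq matrix_power_apply fun_eq_iff)

lemma matrix_power_eigenvector: "A *v v = \<mu> *s v \<Longrightarrow> matrix_power A k *v v = \<mu> ^ k *s v"
  for A :: "'a::field^'n^'n"
  by (induction k) (simp_all add: matrix_vector_mul_assoc[symmetric] vec.scale)

lemma matrix_power_commute:
  "(\<And>v. A *v (K *v v) = K *v (A *v v)) \<Longrightarrow> A *v (matrix_power K k *v v) = matrix_power K k *v (A *v v)"
  by (induction k arbitrary: v) (simp_all add: matrix_vector_mul_assoc[symmetric])

lemma matrix_vector_mult_mat: "mat c *v v = c *s v"
  for v :: "'a::semiring_1^'n"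
proof -
  have "(\<Sum>j\<in>UNIV. (if i = j then c else 0) * v $ j) = c * v $ i" for i
    by (simp add: if_distrib[of "\<lambda>a. a * _"] cong: if_cong)
  then show ?thesis by (simp add: vec_eq_iff matrix_vector_mult_def mat_def)
qed

lemma matrix_scaleR_apply: "(c *\<^sub>R M) *v v = of_real c *s (M *v v)"
  for M :: "'a::real_algebra_1^'n^'m"
  by (simp add: vec_eq_iff matrix_vector_mult_def scaleR_conv_of_real[where 'a='a] sum_distrib_left mult.assoc)

lemma sum_matrix_vector_mult: "(\<Sum>i\<in>I. f i) *v v = (\<Sum>i\<in>I. f i *v v)"
  for f :: "'i \<Rightarrow> 'a::semiring_1^'n^'m"
  by (induction I rule: infinite_finite_induct) (simp_all add: matrix_vector_mult_add_rdistrib)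

lemma finite_eigenvalues: "finite (eigenvalues A)"
proof -
  obtain j c where jc: "matrix_power A j = (\<Sum>i<j. c i *\<^sub>R matrix_power A i)"
    using eucl.exists_linear_recurrence[of "matrix_power A"] by blast
  define p where "p = monom 1 j - (\<Sum>i<j. monom (complex_of_real (c i)) i)"
  have "coeff p j = 1" by (simp add: p_def coeff_diff coeff_sum coeff_monom)
  then have "p \<noteq> 0" by auto
  have "poly p \<mu> = 0" if "\<mu> \<in> eigenvalues A" for \<mu>
  proof -
    from that obtain v where v: "v \<noteq> 0" "A *v v = \<mu> *s v" unfolding eigenvalues_def by blast
    have "\<mu> ^ j *s v = (\<Sum>i<j. of_real (c i) * \<mu> ^ i) *s v"
      using arg_cong[OF jc, of "\<lambda>M. M *v v"]
      by (simp add: matrix_power_eigenvector[OF v(2)] sum_matrix_vector_mult matrix_scaleR_apply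
          vector_smult_assoc vec.scale_sum_left)
    then show ?thesis using v(1) by (simp add: p_def poly_sum poly_monom vec.scale_cancel_right)
  qed
  then have "eigenvalues A \<subseteq> {\<mu>. poly p \<mu> = 0}" by blast
  then show ?thesis using poly_roots_finite[OF \<open>p \<noteq> 0\<close>] finite_subset by blast
qed

definition poly_apply :: "'a::field^'n^'n \<Rightarrow> 'a poly \<Rightarrow> 'a^'n \<Rightarrow> 'a^'n" where
  "poly_apply A p w = (\<Sum>i\<le>degree p. coeff p i *s (matrix_power A i *v w))"

lemma poly_apply_bound:
  "degree p \<le> n \<Longrightarrow> poly_apply A p w = (\<Sum>i\<le>n. coeff p i *s (matrix_power A i *v w))"
  unfolding poly_apply_def by (rule sum.mono_neutral_left) (auto simp: coeff_eq_0)

lemma poly_apply_add: "poly_apply A (p + q) w = poly_apply A p w + poly_apply A q w"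
proof -
  let ?n = "max (degree p) (degree q)"
  have "degree (p + q) \<le> ?n" by (rule degree_add_le) auto
  then show ?thesis
    by (simp add: poly_apply_bound[of _ ?n] vector_sadd_rdistrib sum.distrib)
qed

lemma poly_apply_smult: "poly_apply A (smult a p) w = a *s poly_apply A p w"
proof -
  have "poly_apply A (smult a p) w = (\<Sum>i\<le>degree p. coeff (smult a p) i *s (matrix_power A i *v w))"
    by (rule poly_apply_bound) (rule degree_smult_le)
  also have "\<dots> = a *s poly_apply A p w"
    by (simp add: poly_apply_def vec.scale_sum_right vector_smult_assoc)
  finally show ?thesis .
qed

lemma poly_apply_pCons_0: "poly_apply A (pCons 0 p) w = A *v poly_apply A p w"
proof -
  have "poly_apply A (pCons 0 p) w
      = (\<Sum>i\<le>Suc (degree p). coeff (pCons 0 p) i *s (matrix_power A i *v w))"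
    by (rule poly_apply_bound) simp
  also have "\<dots> = A *v poly_apply A p w"
    by (simp del: sum.atMost_Suc add: sum.atMost_Suc_shift poly_apply_def vec.sum vec.scale
        matrix_vector_mul_assoc[symmetric])
  finally show ?thesis .
qed

lemma poly_apply_const: "poly_apply A [:a:] w = a *s w"
  by (simp add: poly_apply_def)

lemma poly_apply_linear_factor:
  "poly_apply A ([:-r, 1:] * p) w = A *v poly_apply A p w - r *s poly_apply A p w"
proof -
  have "[:-r, 1:] * p = smult (-r) p + pCons 0 p" by simp
  then show ?thesis
    by (simp only: poly_apply_add poly_apply_smult poly_apply_pCons_0) (simp add: vec_eq_iff)
qed

lemma poly_apply_in_invariant_subspace:
  assumes "vec.subspace W" "(*v) A ` W \<subseteq> W" "w \<in> W"
  shows "poly_apply A p w \<in> W"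
proof -
  have "matrix_power A i *v w \<in> W" for i
    using assms(2,3) by (induction i) (auto simp: matrix_vector_mul_assoc[symmetric])
  then show ?thesis
    unfolding poly_apply_def by (intro vec.subspace_sum vec.subspace_scale assms(1))
qed

lemma eigenvector_of_annihilating_poly:
  fixes A :: "'a::alg_closed_field^'n^'n"
  assumes "p \<noteq> 0" "poly_apply A p w = 0" "w \<noteq> 0"
    and W: "vec.subspace W" "(*v) A ` W \<subseteq> W" "w \<in> W"
  shows "\<exists>u\<in>W. u \<noteq> 0 \<and> (\<exists>\<mu>. A *v u = \<mu> *s u)"
  using assms(1,2)
proof (induction "degree p" arbitrary: p rule: less_induct)
  case less
  show ?case
  proof (cases "degree p = 0")
    case True
    then obtain a where "p = [:a:]" by (rule degree_eq_zeroE)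
    with less.prems \<open>w \<noteq> 0\<close> show ?thesis by (simp add: poly_apply_const)
  next
    case False
    then obtain r where "poly p r = 0" using alg_closed_imp_poly_has_root by blast
    then obtain q where pq: "p = [:-r, 1:] * q" by (metis dvdE poly_eq_0_iff_dvd)
    with less.prems have "q \<noteq> 0" by auto
    have "degree p = degree [:-r, 1:] + degree q"
      unfolding pq by (rule degree_mult_eq) (use \<open>q \<noteq> 0\<close> in auto)
    then have "degree q < degree p" by simp
    show ?thesis
    proof (cases "poly_apply A q w = 0")
      case True
      with less.hyps \<open>degree q < degree p\<close> \<open>q \<noteq> 0\<close> show ?thesis by blast
    next
      case False
      have "A *v poly_apply A q w = r *s poly_apply A q w"
        using less.prems(2) unfolding pq poly_apply_linear_factor by simp
      with False poly_apply_in_invariant_subspace[OF W] show ?thesis by blast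
    qed
  qed
qed

lemma eigenvector_in_invariant_subspace:
  fixes A :: "'a::alg_closed_field^'n^'n"
  assumes W: "vec.subspace W" "(*v) A ` W \<subseteq> W" and "w \<in> W" "w \<noteq> 0"
  shows "\<exists>u\<in>W. u \<noteq> 0 \<and> (\<exists>\<mu>. A *v u = \<mu> *s u)"
proof -
  obtain j c where jc: "matrix_power A j *v w = (\<Sum>i<j. c i *s (matrix_power A i *v w))"
    using vec.exists_linear_recurrence[of "\<lambda>i. matrix_power A i *v w"] by blast
  define p where "p = monom 1 j - (\<Sum>i<j. monom (c i) i)"
  have coeff_p: "coeff p i = (if i = j then 1 else if i < j then - c i else 0)" for i
    by (auto simp: p_def coeff_diff coeff_sum coeff_monom)
  then have "p \<noteq> 0" by (metis one_neq_zero coeff_0)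
  have "poly_apply A p w = (\<Sum>i\<le>j. coeff p i *s (matrix_power A i *v w))"
    by (rule poly_apply_bound) (rule degree_le, simp add: coeff_p)
  also have "\<dots> = matrix_power A j *v w - (\<Sum>i<j. c i *s (matrix_power A i *v w))"
    by (simp add: lessThan_Suc_atMost[symmetric] sum.lessThan_Suc coeff_p sum_negf)
  also have "\<dots> = 0"
    using jc by simp
  finally show ?thesis using eigenvector_of_annihilating_poly[OF \<open>p \<noteq> 0\<close> _ assms(4) W assms(3)] by blast
qed

section \<open>Operators that kill every eigenvector\<close>

lemma vec_dim_image_less_if_kernel:
  fixes K :: "'a::field^'n^'n"
  assumes "vec.subspace W" "u \<in> W" "u \<noteq> 0" "K *v u = 0"
  shows "vec.dim ((*v) K ` W) < vec.dim W"
proof -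
  obtain B where B: "u \<in> B" "B \<subseteq> W" "vec.independent B" "W \<subseteq> vec.span B"
    using vec.maximal_independent_subset_extend[of "{u}" W] assms(2,3)
    by (auto simp: vec.independent_insert)
  have "finite B" using B(3) vec.independent_bound_general by blast
  have "(*v) K ` W \<subseteq> (*v) K ` vec.span B" using B(4) by (rule image_mono)
  also have "\<dots> = vec.span ((*v) K ` B)" by (rule vec.span_image[symmetric])
  also have "(*v) K ` B = insert 0 ((*v) K ` (B - {u}))"
    using B(1) assms(4) by auto
  finally have "vec.dim ((*v) K ` W) \<le> card ((*v) K ` (B - {u}))"
    by (intro vec.dim_le_card) (simp_all add: \<open>finite B\<close>)
  also have "\<dots> \<le> card (B - {u})" by (rule card_image_le) (simp add: \<open>finite B\<close>)
  also have "\<dots> < card B" using B(1) \<open>finite B\<close> by (intro card_Diff1_less)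
  also have "card B = vec.dim W" using vec.dim_unique[OF B(2) B(4) B(3) refl] by simp
  finally show ?thesis .
qed

lemma nilpotent_if_commuting_and_kills_eigenvectors:
  fixes A K :: "'a::alg_closed_field^'n^'n"
  assumes commute: "\<And>v. A *v (K *v v) = K *v (A *v v)"
    and kills: "\<And>v \<mu>. v \<noteq> 0 \<Longrightarrow> A *v v = \<mu> *s v \<Longrightarrow> K *v v = 0"
  shows "matrix_power K CARD('n) = 0"
proof -
  define W where "W k = range ((*v) (matrix_power K k))" for k
  have subspace: "vec.subspace (W k)" for k
    unfolding W_def by (rule vec.subspace_image) (rule vec.subspace_UNIV)
  have invariant: "(*v) A ` W k \<subseteq> W k" for k
    using matrix_power_commute[OF commute] by (auto simp: W_def)
  have W_Suc: "W (Suc k) = (*v) K ` W k" for k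
    by (auto simp: W_def matrix_vector_mul_assoc[symmetric] image_image)
  have "vec.dim (W k) \<le> CARD('n) - k" for k
  proof (induction k)
    case 0
    show ?case using dim_subset_UNIV_cart_gen[of "W 0"] by simp
  next
    case (Suc k)
    show ?case
    proof (cases "W k \<subseteq> {0}")
      case True
      then have "W (Suc k) \<subseteq> {0}" by (auto simp: W_Suc)
      then show ?thesis by (simp flip: vec.dim_eq_0)
    next
      case False
      then obtain w where "w \<in> W k" "w \<noteq> 0" by blast
      then obtain u \<mu> where "u \<in> W k" "u \<noteq> 0" "A *v u = \<mu> *s u"
        using eigenvector_in_invariant_subspace[OF subspace invariant] by blast
      then have "vec.dim (W (Suc k)) < vec.dim (W k)"
        unfolding W_Suc by (intro vec_dim_image_less_if_kernel subspace kills)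
      with Suc show ?thesis by linarith
    qed
  qed
  from this[of "CARD('n)"] have "W CARD('n) \<subseteq> {0}" by simp
  then show ?thesis by (auto simp: W_def matrix_eq)
qed

definition eigen_annihilator :: "'a::field^'n^'n \<Rightarrow> 'a \<Rightarrow> 'a list \<Rightarrow> 'a^'n^'n" where
  "eigen_annihilator A \<sigma> ls = foldr (\<lambda>l M. (A ** A - mat (\<sigma> * l^2)) ** M) ls (mat 1)"

lemma eigen_annihilator_Nil [simp]: "eigen_annihilator A \<sigma> [] = mat 1"
  by (simp add: eigen_annihilator_def)

lemma eigen_annihilator_Cons [simp]:
  "eigen_annihilator A \<sigma> (l # ls) = (A ** A - mat (\<sigma> * l^2)) ** eigen_annihilator A \<sigma> ls"
  by (simp add: eigen_annihilator_def)

lemma eigen_annihilator_commute: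
  "A *v (eigen_annihilator A \<sigma> ls *v v) = eigen_annihilator A \<sigma> ls *v (A *v v)"
proof (induction ls arbitrary: v)
  case (Cons l ls)
  have "A *v ((A ** A - mat c) *v u) = (A ** A - mat c) *v (A *v u)" for c u
    by (simp add: matrix_vector_mult_diff_rdistrib matrix_vector_mult_diff_distrib
        matrix_vector_mult_mat vec.scale matrix_vector_mul_assoc[symmetric])
  with Cons.IH show ?case by (simp add: matrix_vector_mul_assoc[symmetric])
qed simp

lemma eigen_annihilator_eigenvector:
  assumes "A *v v = \<mu> *s v"
  shows "eigen_annihilator A \<sigma> ls *v v = (\<Prod>l\<leftarrow>ls. \<mu>^2 - \<sigma> * l^2) *s v"
proof (induction ls)
  case (Cons l ls)
  have "(A ** A - mat c) *v (a *s v) = ((\<mu>^2 - c) * a) *s v" for a c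
    by (simp add: matrix_vector_mult_diff_rdistrib matrix_vector_mult_mat vec.scale assms
        matrix_vector_mul_assoc[symmetric] vector_smult_assoc)
      (simp add: vec_eq_iff algebra_simps power2_eq_square)
  with Cons.IH show ?case by (simp add: matrix_vector_mul_assoc[symmetric])
qed simp

lemma eigen_annihilator_0: "eigen_annihilator A 0 ls = matrix_power A (2 * length ls)"
  by (induction ls) (simp_all add: matrix_mul_assoc)

section \<open>Holomorphy along complex lines\<close>

text \<open>Holomorphy along every complex line stands in for polynomial dependence on \<open>x\<close>:
  it is closed under the ring operations and is what the identity theorem needs.\<close>

definition line_holomorphic :: "(complex^'n \<Rightarrow> complex) \<Rightarrow> bool" where
  "line_holomorphic f \<longleftrightarrow> (\<forall>a b. (\<lambda>t. f (a + t *s b)) holomorphic_on UNIV)"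

definition line_holomorphic_mat :: "(complex^'n \<Rightarrow> complex^'m^'k) \<Rightarrow> bool" where
  "line_holomorphic_mat M \<longleftrightarrow> (\<forall>i j. line_holomorphic (\<lambda>x. M x $ i $ j))"

lemma line_holomorphic_const: "line_holomorphic (\<lambda>x. c)"
  by (simp add: line_holomorphic_def)

lemma line_holomorphic_component: "line_holomorphic (\<lambda>x. x $ i)"
  by (auto simp: line_holomorphic_def intro!: holomorphic_intros)

lemma line_holomorphic_diff:
  "line_holomorphic f \<Longrightarrow> line_holomorphic g \<Longrightarrow> line_holomorphic (\<lambda>x. f x - g x)"
  by (auto simp: line_holomorphic_def intro!: holomorphic_intros)

lemma line_holomorphic_mult:
  "line_holomorphic f \<Longrightarrow> line_holomorphic g \<Longrightarrow> line_holomorphic (\<lambda>x. f x * g x)"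
  by (auto simp: line_holomorphic_def intro!: holomorphic_intros)

lemma line_holomorphic_divide:
  "line_holomorphic f \<Longrightarrow> line_holomorphic (\<lambda>x. f x / c)"
  by (auto simp: line_holomorphic_def intro!: holomorphic_intros)

lemma line_holomorphic_power:
  "line_holomorphic f \<Longrightarrow> line_holomorphic (\<lambda>x. f x ^ k)"
  by (auto simp: line_holomorphic_def intro!: holomorphic_intros)

lemma line_holomorphic_sum:
  "(\<And>i. i \<in> I \<Longrightarrow> line_holomorphic (f i)) \<Longrightarrow> line_holomorphic (\<lambda>x. \<Sum>i\<in>I. f i x)"
  by (auto simp: line_holomorphic_def intro!: holomorphic_intros)

lemma line_holomorphic_mat_const: "line_holomorphic_mat (\<lambda>x. M)"
  by (simp add: line_holomorphic_mat_def line_holomorphic_const)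

lemma line_holomorphic_mat_mat:
  assumes "line_holomorphic c"
  shows "line_holomorphic_mat (\<lambda>x. mat (c x))"
  unfolding line_holomorphic_mat_def
proof (intro allI)
  fix i j
  show "line_holomorphic (\<lambda>x. mat (c x) $ i $ j)"
    using assms by (cases "i = j") (simp_all add: mat_def line_holomorphic_const)
qed

lemma line_holomorphic_mat_diff:
  "line_holomorphic_mat M \<Longrightarrow> line_holomorphic_mat N \<Longrightarrow> line_holomorphic_mat (\<lambda>x. M x - N x)"
  by (simp add: line_holomorphic_mat_def line_holomorphic_diff)

lemma line_holomorphic_mat_mult:
  "line_holomorphic_mat M \<Longrightarrow> line_holomorphic_mat N \<Longrightarrow> line_holomorphic_mat (\<lambda>x. M x ** N x)"
  by (simp add: line_holomorphic_mat_def matrix_matrix_mult_def line_holomorphic_sum line_holomorphic_mult)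

lemma line_holomorphic_mat_matrix_power:
  "line_holomorphic_mat M \<Longrightarrow> line_holomorphic_mat (\<lambda>x. matrix_power (M x) k)"
  by (induction k) (simp_all add: line_holomorphic_mat_const line_holomorphic_mat_mult)

lemmas line_holomorphic_intros =
  line_holomorphic_const line_holomorphic_component line_holomorphic_diff
  line_holomorphic_mult line_holomorphic_divide line_holomorphic_power line_holomorphic_sum
  line_holomorphic_mat_const line_holomorphic_mat_mat line_holomorphic_mat_diff
  line_holomorphic_mat_mult line_holomorphic_mat_matrix_power

lemma line_holomorphic_mat_eigen_annihilator:
  "line_holomorphic_mat F \<Longrightarrow> line_holomorphic \<sigma> \<Longrightarrow>
    line_holomorphic_mat (\<lambda>x. eigen_annihilator (F x) (\<sigma> x) ls)"
  by (induction ls) (simp_all add: line_holomorphic_intros)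

lemma entire_eq_0_if_eq_0_on_interval:
  assumes "f holomorphic_on UNIV" "d > 0" "\<And>t. 0 < t \<Longrightarrow> t < d \<Longrightarrow> f (complex_of_real t) = 0"
  shows "f z = 0"
proof (rule analytic_continuation[OF assms(1) open_UNIV connected_UNIV subset_UNIV UNIV_I])
  show "0 islimpt complex_of_real ` {0<..<d}"
    unfolding islimpt_approachable
  proof (intro allI impI)
    fix e :: real
    assume "e > 0"
    with \<open>d > 0\<close> show "\<exists>x'\<in>complex_of_real ` {0<..<d}. x' \<noteq> 0 \<and> dist x' 0 < e"
      by (intro bexI[of _ "complex_of_real (min (e/2) (d/2))"]) auto
  qed
qed (use assms(3) in auto)

lemma cvec_add: "cvec (x + y) = cvec x + cvec y"
  by (simp add: vec_eq_iff cvec_def)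

lemma cvec_diff: "cvec (x - y) = cvec x - cvec y"
  by (simp add: vec_eq_iff cvec_def)

lemma cvec_scaleR: "cvec (c *\<^sub>R x) = complex_of_real c *s cvec x"
  by (simp add: vec_eq_iff cvec_def)

lemma cvec_Re_Im: "cvec (\<chi> k. Re (z $ k)) + \<i> *s cvec (\<chi> k. Im (z $ k)) = z"
  by (simp add: vec_eq_iff cvec_def complex_eq_iff)

lemma line_holomorphic_eq_0_if_eq_0_on_real_open:
  assumes f: "line_holomorphic f"
    and U: "open U" "x0 \<in> U" "\<And>x. x \<in> U \<Longrightarrow> f (cvec x) = 0"
  shows "f z = 0"
proof -
  have real: "f (cvec w) = 0" for w
  proof -
    obtain e where "e > 0" "ball x0 e \<subseteq> U" using U(1,2) open_contains_ball by blast
    define d where "d = e / (norm (w - x0) + 1)"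
    have n: "norm (w - x0) + 1 > 0" using norm_ge_zero[of "w - x0"] by linarith
    then have "d > 0" using \<open>e > 0\<close> by (simp add: d_def)
    have on_segment: "f (cvec x0 + complex_of_real t *s cvec (w - x0)) = 0" if "0 < t" "t < d" for t
    proof -
      have "norm (t *\<^sub>R (w - x0)) \<le> t * (norm (w - x0) + 1)" using \<open>0 < t\<close> by simp
      also have "\<dots> < d * (norm (w - x0) + 1)"
        using that n by (intro mult_strict_right_mono)
      also have "\<dots> = e" using n by (simp add: d_def)
      finally have "x0 + t *\<^sub>R (w - x0) \<in> U"
        using \<open>ball x0 e \<subseteq> U\<close> by (auto simp: dist_norm)
      then have "f (cvec (x0 + t *\<^sub>R (w - x0))) = 0" by (rule U(3))
      then show ?thesis by (simp only: cvec_add cvec_scaleR)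
    qed
    have "(\<lambda>t. f (cvec x0 + t *s cvec (w - x0))) holomorphic_on UNIV"
      using f by (simp add: line_holomorphic_def)
    from entire_eq_0_if_eq_0_on_interval[OF this \<open>d > 0\<close> on_segment]
    have "f (cvec x0 + 1 *s cvec (w - x0)) = 0" .
    then show ?thesis by (simp add: cvec_diff)
  qed
  have "(\<lambda>t. f (cvec (\<chi> k. Re (z $ k)) + t *s cvec (\<chi> k. Im (z $ k)))) holomorphic_on UNIV"
    using f by (simp add: line_holomorphic_def)
  then have "f (cvec (\<chi> k. Re (z $ k)) + \<i> *s cvec (\<chi> k. Im (z $ k))) = 0"
    by (rule entire_eq_0_if_eq_0_on_interval[where d = 1]) (simp_all only: real flip: cvec_add cvec_scaleR)
  then show ?thesis by (simp only: cvec_Re_Im)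
qed

lemma line_holomorphic_mat_eq_0_if_eq_0_on_real_open:
  assumes "line_holomorphic_mat M" "open U" "x0 \<in> U" "\<And>x. x \<in> U \<Longrightarrow> M (cvec x) = 0"
  shows "M z = 0"
  using assms line_holomorphic_eq_0_if_eq_0_on_real_open[of "\<lambda>x. M x $ i $ j" U x0 z for i j]
  by (simp add: line_holomorphic_mat_def vec_eq_iff)

section \<open>Homogeneous families with constant spectrum on a pseudo-sphere\<close>

lemma ip_cvec: "ip G (cvec x) (cvec x) = complex_of_real (x \<bullet> (G *v x))"
  by (simp add: ip_def cvec_def inner_vec_def matrix_vector_mult_def sum_distrib_left mult_ac)

lemma line_holomorphic_ip: "line_holomorphic (\<lambda>x. ip G x x)"
  unfolding ip_def by (intro line_holomorphic_intros)

lemma open_level_cone: "open {x. 0 < \<kappa> * (x \<bullet> (G *v x))}" for G :: "real^'n^'n"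
  by (intro open_Collect_less continuous_intros)

lemma exists_non_isotropic_vector:
  assumes "nondeg_sym G"
  shows "\<exists>x. x \<bullet> (G *v x) \<noteq> 0"
proof (rule ccontr)
  assume "\<not> ?thesis"
  then have isotropic: "x \<bullet> (G *v x) = 0" for x by blast
  have symmetric: "x \<bullet> (G *v y) = y \<bullet> (G *v x)" for x y
  proof -
    have "x \<bullet> (G *v y) = (transpose G *v x) \<bullet> y" by (simp add: dot_lmul_matrix)
    also have "\<dots> = y \<bullet> (G *v x)" using assms by (simp add: nondeg_sym_def inner_commute)
    finally show ?thesis .
  qed
  have "G *v y = 0" for y
  proof -
    have "(x + y) \<bullet> (G *v (x + y)) = x \<bullet> (G *v x) + 2 * (x \<bullet> (G *v y)) + y \<bullet> (G *v y)" for x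
      by (simp add: matrix_vector_right_distrib inner_add_left inner_add_right symmetric[of y x])
    then have "x \<bullet> (G *v y) = 0" for x by (simp add: isotropic)
    from this[of "G *v y"] show ?thesis by simp
  qed
  moreover obtain B where "B ** G = mat 1"
    using assms by (auto simp: nondeg_sym_def invertible_left_inverse)
  ultimately have "x = 0" for x :: "real^'n"
    using matrix_left_invertible_ker by blast
  from this[of "axis undefined 1"] show False by simp
qed

lemma exists_unit_vector:
  assumes "nondeg_sym G"
  shows "\<exists>x. x \<bullet> (G *v x) = 1 \<or> x \<bullet> (G *v x) = -1"
proof -
  obtain x where x: "x \<bullet> (G *v x) \<noteq> 0" using exists_non_isotropic_vector[OF assms] by blast
  define y where "y = (1 / sqrt \<bar>x \<bullet> (G *v x)\<bar>) *\<^sub>R x"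
  have "y \<bullet> (G *v y) = x \<bullet> (G *v x) / \<bar>x \<bullet> (G *v x)\<bar>"
    by (simp add: y_def matrix_vector_mult_scaleR)
  also have "\<dots> = sgn (x \<bullet> (G *v x))" by (simp add: sgn_if)
  finally show ?thesis using x by (auto simp: sgn_if split: if_splits)
qed

lemma eigenvalue_rescaled_to_level_set:
  fixes F :: "complex^'n \<Rightarrow> complex^'n^'n" and G :: "real^'n^'n"
  assumes homogeneous: "\<And>c x v. F (c *s x) *v v = c ^ d *s (F x *v v)"
    and cone: "0 < \<kappa> * (x \<bullet> (G *v x))"
    and eigen: "v \<noteq> 0" "F (cvec x) *v v = \<mu> *s v"
  shows "\<exists>y l. y \<bullet> (G *v y) = \<kappa> \<and> l \<in> eigenvalues (F (cvec y)) \<and>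
    \<mu>^2 = complex_of_real (x \<bullet> (G *v x) / \<kappa>) ^ d * l^2"
proof -
  define \<rho> where "\<rho> = x \<bullet> (G *v x) / \<kappa>"
  have "\<rho> > 0" using cone by (auto simp: \<rho>_def zero_less_mult_iff zero_less_divide_iff)
  define s where "s = sqrt \<rho>"
  have "s > 0" "s^2 = \<rho>" using \<open>\<rho> > 0\<close> by (simp_all add: s_def)
  define y where "y = (1 / s) *\<^sub>R x"
  have "y \<bullet> (G *v y) = x \<bullet> (G *v x) / s^2"
    by (simp add: y_def matrix_vector_mult_scaleR power2_eq_square)
  also have "\<dots> = \<kappa>" using cone \<open>s^2 = \<rho>\<close> by (auto simp: \<rho>_def)
  finally have "y \<bullet> (G *v y) = \<kappa>" .
  have "cvec x = complex_of_real s *s cvec y"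
    using \<open>s > 0\<close> by (simp add: y_def cvec_scaleR vector_smult_assoc flip: of_real_mult)
  then have "complex_of_real s ^ d *s (F (cvec y) *v v) = \<mu> *s v"
    using eigen(2) homogeneous by simp
  then have "F (cvec y) *v v = (\<mu> / complex_of_real s ^ d) *s v"
    using \<open>s > 0\<close> by (simp add: vec_eq_iff field_simps)
  then have "\<mu> / complex_of_real s ^ d \<in> eigenvalues (F (cvec y))"
    using eigen(1) unfolding eigenvalues_def by blast
  moreover have "\<mu>^2 = complex_of_real \<rho> ^ d * (\<mu> / complex_of_real s ^ d)^2"
    using \<open>s > 0\<close> by (simp add: power_divide mult.commute flip: \<open>s^2 = \<rho>\<close> power_mult power_mult_distrib)
  ultimately show ?thesis using \<open>y \<bullet> (G *v y) = \<kappa>\<close> unfolding \<rho>_def by blast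
qed

lemma eigen_annihilator_nilpotent_on_cone:
  fixes F :: "complex^'n \<Rightarrow> complex^'n^'n" and G :: "real^'n^'n"
  assumes homogeneous: "\<And>c x v. F (c *s x) *v v = c ^ d *s (F x *v v)"
    and spectrum: "\<And>y. y \<bullet> (G *v y) = \<kappa> \<Longrightarrow> eigenvalues (F (cvec y)) \<subseteq> set ls"
    and cone: "0 < \<kappa> * (x \<bullet> (G *v x))"
  defines "\<sigma> \<equiv> complex_of_real (x \<bullet> (G *v x) / \<kappa>) ^ d"
  shows "matrix_power (eigen_annihilator (F (cvec x)) \<sigma> ls) CARD('n) = 0"
proof (rule nilpotent_if_commuting_and_kills_eigenvectors)
  show "F (cvec x) *v (eigen_annihilator (F (cvec x)) \<sigma> ls *v v) =
      eigen_annihilator (F (cvec x)) \<sigma> ls *v (F (cvec x) *v v)" for v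
    by (rule eigen_annihilator_commute)
  fix v \<mu>
  assume eigen: "v \<noteq> 0" "F (cvec x) *v v = \<mu> *s v"
  then obtain y l where "y \<bullet> (G *v y) = \<kappa>" "l \<in> eigenvalues (F (cvec y))" "\<mu>^2 = \<sigma> * l^2"
    using eigenvalue_rescaled_to_level_set[OF homogeneous cone] unfolding \<sigma>_def by blast
  then have "l \<in> set ls" using spectrum by blast
  with \<open>\<mu>^2 = \<sigma> * l^2\<close> have "(\<Prod>l\<leftarrow>ls. \<mu>^2 - \<sigma> * l^2) = 0"
    by (auto simp: prod_list_zero_iff)
  then show "eigen_annihilator (F (cvec x)) \<sigma> ls *v v = 0"
    by (simp add: eigen_annihilator_eigenvector[OF eigen(2)])
qed

lemma nilpotent_on_null_cone_if_eigenvalues_constant_on_level_set: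
  fixes F :: "complex^'n \<Rightarrow> complex^'n^'n" and G :: "real^'n^'n"
  assumes holomorphic: "line_holomorphic_mat F"
    and homogeneous: "\<And>c x v. F (c *s x) *v v = c ^ d *s (F x *v v)" and "d > 0"
    and level: "x0 \<bullet> (G *v x0) = \<kappa>" "\<kappa> \<noteq> 0"
    and invariant: "\<And>x. x \<bullet> (G *v x) = \<kappa> \<Longrightarrow> eigenvalues (F (cvec x)) = eigenvalues (F (cvec x0))"
    and null: "ip G z z = 0"
  shows "nilpotent_mat (F z)"
proof -
  obtain ls where ls: "set ls = eigenvalues (F (cvec x0))"
    using finite_list[OF finite_eigenvalues] by blast
  \<comment> \<open>Eigenvalues at \<open>x\<close> are \<open>s^d l\<close> with \<open>s = sqrt ((x,x)/\<kappa>)\<close> and \<open>l\<close> in the spectrum at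
    \<open>x0\<close>; squaring them removes the square root, so \<open>\<sigma>\<close> is polynomial in \<open>x\<close>.\<close>
  define \<sigma> where "\<sigma> x = (ip G x x / complex_of_real \<kappa>) ^ d" for x
  define M where "M x = matrix_power (eigen_annihilator (F x) (\<sigma> x) ls) CARD('n)" for x
  have "M (cvec x) = 0" if "x \<in> {x. 0 < \<kappa> * (x \<bullet> (G *v x))}" for x
    using eigen_annihilator_nilpotent_on_cone[OF homogeneous _ that[simplified]] invariant ls
    by (simp add: M_def \<sigma>_def ip_cvec)
  moreover have "line_holomorphic_mat M"
    unfolding M_def \<sigma>_def
    by (intro line_holomorphic_mat_matrix_power line_holomorphic_mat_eigen_annihilator holomorphic
        line_holomorphic_intros line_holomorphic_ip)
  moreover have "x0 \<in> {x. 0 < \<kappa> * (x \<bullet> (G *v x))}"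
    using level by (auto simp: zero_less_mult_iff linorder_neq_iff)
  ultimately have "M z = 0"
    using line_holomorphic_mat_eq_0_if_eq_0_on_real_open[OF _ open_level_cone] by blast
  moreover have "\<sigma> z = 0" using null \<open>d > 0\<close> by (simp add: \<sigma>_def)
  ultimately have "matrix_power (matrix_power (F z) (2 * length ls)) CARD('n) = 0"
    by (simp only: M_def eigen_annihilator_0)
  then have "matrix_power (F z) (2 * length ls * CARD('n)) = 0"
    by (simp only: matrix_power_matrix_power)
  then show ?thesis by (auto simp: nilpotent_mat_iff_matrix_power)
qed

section \<open>The Szabo operator\<close>

lemma szabo_homogeneous: "szabo G T (c *s x) *v v = c ^ 3 *s (szabo G T x *v v)"
proof -
  have "tens5 T a (c *s x) (c *s x) b (c *s x) = c ^ 3 * tens5 T a x x b x" for a b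
    unfolding tens5_def by (simp add: sum_distrib_left power3_eq_cube mult_ac)
  then have "(\<chi> w y. tens5 T (axis y 1) (c *s x) (c *s x) (axis w 1) (c *s x)) *v v
      = c ^ 3 *s ((\<chi> w y. tens5 T (axis y 1) x x (axis w 1) x) *v v)"
    by (simp add: vec_eq_iff matrix_vector_mult_def sum_distrib_left mult.assoc)
  then show ?thesis
    by (simp add: szabo_def matrix_vector_mul_assoc[symmetric] vector_scalar_commute)
qed

lemma line_holomorphic_mat_szabo: "line_holomorphic_mat (szabo G T)"
  unfolding szabo_def
proof (intro line_holomorphic_mat_mult line_holomorphic_mat_const)
  show "line_holomorphic_mat (\<lambda>x. \<chi> w y. tens5 T (axis y 1) x x (axis w 1) x)"
    unfolding line_holomorphic_mat_def tens5_def by (simp add: line_holomorphic_intros)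
qed

theorem theorem1p5:
  fixes G :: "real^'n^'n"
    and T :: "'n \<Rightarrow> 'n \<Rightarrow> 'n \<Rightarrow> 'n \<Rightarrow> 'n \<Rightarrow> real"
  assumes dim: "CARD('n) \<ge> 3"
    and G: "nondeg_sym G"
    and T: "cdact T"
    and spacelike: "\<forall>x y. ip G (cvec x) (cvec x) = 1 \<longrightarrow> ip G (cvec y) (cvec y) = 1 \<longrightarrow>
        eigenvalues (szabo G T (cvec x)) = eigenvalues (szabo G T (cvec y))"
    and timelike: "\<forall>x y. ip G (cvec x) (cvec x) = -1 \<longrightarrow> ip G (cvec y) (cvec y) = -1 \<longrightarrow>
        eigenvalues (szabo G T (cvec x)) = eigenvalues (szabo G T (cvec y))"
  shows "\<forall>x::complex^'n. ip G x x = 0 \<longrightarrow> nilpotent_mat (szabo G T x)"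
proof -
  \<comment> \<open>Only the cubic homogeneity of \<open>S(x)\<close> and its polynomial dependence on \<open>x\<close> are used.\<close>
  obtain x0 where unit: "x0 \<bullet> (G *v x0) = 1 \<or> x0 \<bullet> (G *v x0) = -1"
    using exists_unit_vector[OF G] by blast
  define \<kappa> where "\<kappa> = x0 \<bullet> (G *v x0)"
  have "\<kappa> \<noteq> 0" using unit by (auto simp: \<kappa>_def)
  have invariant: "eigenvalues (szabo G T (cvec x)) = eigenvalues (szabo G T (cvec x0))"
    if "x \<bullet> (G *v x) = \<kappa>" for x
    using unit
  proof
    assume "x0 \<bullet> (G *v x0) = 1"
    then have "ip G (cvec x) (cvec x) = 1" "ip G (cvec x0) (cvec x0) = 1"
      using that by (simp_all add: ip_cvec \<kappa>_def)
    then show ?thesis using spacelike by blast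
  next
    assume "x0 \<bullet> (G *v x0) = -1"
    then have "ip G (cvec x) (cvec x) = -1" "ip G (cvec x0) (cvec x0) = -1"
      using that by (simp_all add: ip_cvec \<kappa>_def)
    then show ?thesis using timelike by blast
  qed
  show ?thesis
    using nilpotent_on_null_cone_if_eigenvalues_constant_on_level_set[OF line_holomorphic_mat_szabo
        szabo_homogeneous _ \<kappa>_def[symmetric] \<open>\<kappa> \<noteq> 0\<close> invariant]
    by simp
qed

end
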